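(* Let $n,m$ be integers with $n-|m|$ even and non-negative, and define the radial Zernike polynomial $R_n^{|m|}(r)=r^{|m|}\,P^{(0,|m|)}_{\frac{n-|m|}{2}}(2r^2-1)$ for $0\le r\le 1$. Then for every integer $k\ge 0$, \[ \max_{0\le r\le 1}\bigl|(R_n^{|m|})^{(k)}(r)\bigr|\;\le\;\frac{n^2(n^2-1^2)\cdots(n^2-(k-1)^2)}{2^k\,(1/2)_k}, \] where the right-hand side is interpreted as $1$ when $k=0$.
   Context: $P_p^{(\alpha,\beta)}$ denotes the Jacobi polynomial of degree $p$ orthogonal with respect to the weight $(1-x)^\alpha(1+x)^\beta$ on $[-1,1]$, with the standard normalization $P_p^{(\alpha,\beta)}(1)=\binom{p+\alpha}{p}$. $f^{(k)}$ denotes the $k$-th derivative of $f$. $(\alpha)_0=1$ and $(\alpha)_k=\alpha(\alpha+1)\cdots(\alpha+k-1)$ for $k\ge1$ (Pochhammer symbol). *)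

theory Defs
  imports "HOL-Analysis.Analysis"
begin

text \<open>Jacobi polynomial P_p^(alpha,beta)(x), standard normalization
  P_p^(alpha,beta)(1) = binom(p+alpha, p), via the explicit formula
  P_p^(a,b)(x) = sum_s binom(p+a, p-s) binom(p+b, s) ((x-1)/2)^s ((x+1)/2)^(p-s).\<close>
definition jacobi_poly :: "nat \<Rightarrow> real \<Rightarrow> real \<Rightarrow> real \<Rightarrow> real" where
  "jacobi_poly p a b x =
     (\<Sum>s\<le>p. ((real p + a) gchoose (p - s)) * ((real p + b) gchoose s)
              * ((x - 1) / 2) ^ s * ((x + 1) / 2) ^ (p - s))"

definition zernike_radial :: "int \<Rightarrow> int \<Rightarrow> real \<Rightarrow> real" where
  "zernike_radial n m r =
     r ^ nat \<bar>m\<bar> * jacobi_poly (nat ((n - \<bar>m\<bar>) div 2)) 0 (of_int \<bar>m\<bar>) (2 * r\<^sup>2 - 1)"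

end

theory Submission
  imports Defs "HOL-Computational_Algebra.Polynomial"
begin

text \<open>
  Write n = a + b with a = (n + m)/2 and b = (n - m)/2, and put r = cos t. Then R_n^m(cos t) is the
  coefficient of x^a in (cos t + x sin t)^b (x cos t - sin t)^a. Both linear factors are combinations
  of e^(it) (x + i) and e^(-it) (x - i), which gives R_n^m(cos t) = sum_k w_k cos ((2k - n) t) with
  w_k a product of two Krawtchouk numbers divided by 2^n. By Krawtchouk reciprocity the two factors
  have the same sign, so w_k >= 0, and sum_k w_k = R_n^m(1) = 1: R_n^m = sum_k w_k T_|2k-n| is a
  convex combination of Chebyshev polynomials. Because T_j' = j U_(j-1) and U_(j+2) = U_j + 2 T_(j+2),
  nonnegative combinations of Chebyshev polynomials are closed under differentiation, and on [-1, 1]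
  such a polynomial has maximal modulus at 1. There the Chebyshev differential equation gives
  T_j^(k)(1) = prod_(i<k) (j^2 - i^2) / (2^k (1/2)_k), which increases with j <= n.
\<close>

fun cheb_T :: "nat \<Rightarrow> real poly" where
  "cheb_T 0 = 1"
| "cheb_T (Suc 0) = monom 1 1"
| "cheb_T (Suc (Suc n)) = 2 * monom 1 1 * cheb_T (Suc n) - cheb_T n"

fun cheb_U :: "nat \<Rightarrow> real poly" where
  "cheb_U 0 = 1"
| "cheb_U (Suc 0) = 2 * monom 1 1"
| "cheb_U (Suc (Suc n)) = 2 * monom 1 1 * cheb_U (Suc n) - cheb_U n"

lemma poly_cheb_T_cos: "poly (cheb_T n) (cos t) = cos (real n * t)"
proof (induction n rule: cheb_T.induct)
  case (3 n)
  have "cos (real (Suc (Suc n)) * t) = 2 * cos t * cos (real (Suc n) * t) - cos (real n * t)"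
    using cos_add[of "real (Suc n) * t" t] cos_diff[of "real (Suc n) * t" t]
    by (simp add: algebra_simps)
  with 3 show ?case by (simp add: poly_monom)
qed (simp_all add: poly_monom)

lemma poly_cheb_T_one: "poly (cheb_T n) 1 = 1"
  using poly_cheb_T_cos[of n 0] by simp

lemma abs_poly_cheb_T_le_one:
  assumes "\<bar>x\<bar> \<le> 1"
  shows "\<bar>poly (cheb_T n) x\<bar> \<le> 1"
  using poly_cheb_T_cos[of n "arccos x"] cos_arccos_abs[OF assms] abs_cos_le_one by metis

lemma cheb_T_Suc_Suc_eq: "cheb_T (Suc (Suc n)) = monom 1 1 * cheb_U (Suc n) - cheb_U n"
proof (induction n rule: cheb_T.induct)
  case (3 n)
  have "cheb_T (Suc (Suc (Suc (Suc n)))) = 2 * monom 1 1 * cheb_T (Suc (Suc (Suc n))) - cheb_T (Suc (Suc n))"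
    by (fact cheb_T.simps(3))
  also have "\<dots> = 2 * monom 1 1 * (monom 1 1 * cheb_U (Suc (Suc n)) - cheb_U (Suc n))
      - (monom 1 1 * cheb_U (Suc n) - cheb_U n)"
    using 3 by simp
  also have "\<dots> = monom 1 1 * cheb_U (Suc (Suc (Suc n))) - cheb_U (Suc (Suc n))"
    by (simp add: algebra_simps)
  finally show ?case .
qed (simp_all add: algebra_simps)

lemma cheb_U_Suc: "cheb_U (Suc n) = monom 1 1 * cheb_U n + cheb_T (Suc n)"
  by (cases n) (simp_all add: cheb_T_Suc_Suc_eq del: cheb_T.simps(3))

lemma cheb_U_Suc_Suc: "cheb_U (Suc (Suc n)) = cheb_U n + 2 * cheb_T (Suc (Suc n))"
  by (simp add: cheb_T_Suc_Suc_eq algebra_simps del: cheb_T.simps)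

lemma pderiv_cheb_T: "pderiv (cheb_T (Suc n)) = of_nat (Suc n) * cheb_U n"
proof (induction n rule: cheb_T.induct)
  case (3 n)
  have "pderiv (cheb_T (Suc (Suc (Suc n)))) =
      2 * cheb_T (Suc (Suc n)) + 2 * monom 1 1 * pderiv (cheb_T (Suc (Suc n))) - pderiv (cheb_T (Suc n))"
    by (simp only: cheb_T.simps(3)[of "Suc n"]) (simp add: pderiv_mult pderiv_diff pderiv_monom del: cheb_T.simps)
  also have "\<dots> = of_nat (Suc (Suc (Suc n))) * cheb_U (Suc (Suc n))"
    using 3 cheb_U_Suc_Suc[of n] by (simp add: algebra_simps del: cheb_T.simps)
  finally show ?case .
qed (simp_all add: pderiv_mult pderiv_diff pderiv_monom algebra_simps)

lemma cheb_T_ode: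
  "(1 - monom 1 1 * monom 1 1) * pderiv (pderiv (cheb_T j)) - monom 1 1 * pderiv (cheb_T j)
     + smult ((real j)\<^sup>2) (cheb_T j) = 0"
proof (cases j)
  case (Suc n)
  define P :: "real poly" where "P = 1 - monom 1 1 * monom 1 1"
  have first_order: "P * pderiv (cheb_T j) = of_nat j * (monom 1 1 * cheb_T j - cheb_T (Suc j))"
    using Suc by (simp add: P_def pderiv_cheb_T cheb_U_Suc cheb_T_Suc_Suc_eq algebra_simps del: cheb_T.simps)
  have "P * pderiv (pderiv (cheb_T j)) - monom 1 1 * pderiv (cheb_T j) + of_nat (j\<^sup>2) * cheb_T j
      = pderiv (P * pderiv (cheb_T j)) + monom 1 1 * pderiv (cheb_T j) + of_nat (j\<^sup>2) * cheb_T j"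
    by (simp add: P_def pderiv_mult pderiv_diff pderiv_monom algebra_simps)
  also have "\<dots> = of_nat j * (cheb_T j + monom 1 1 * pderiv (cheb_T j) - pderiv (cheb_T (Suc j)))
      + monom 1 1 * pderiv (cheb_T j) + of_nat (j\<^sup>2) * cheb_T j"
    unfolding first_order by (simp add: pderiv_diff pderiv_mult pderiv_monom algebra_simps del: cheb_T.simps)
  also have "\<dots> = 0"
    using Suc cheb_U_Suc[of n] by (simp add: pderiv_cheb_T power2_eq_square algebra_simps del: cheb_T.simps)
  finally show ?thesis
    unfolding P_def of_nat_mult_conv_smult by simp
qed simp

lemma pderiv_ode_step:
  fixes p :: "real poly"
  assumes "(1 - monom 1 1 * monom 1 1) * pderiv (pderiv p) - smult c (monom 1 1 * pderiv p) + smult d p = 0"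
  shows "(1 - monom 1 1 * monom 1 1) * pderiv (pderiv (pderiv p)) - smult (c + 2) (monom 1 1 * pderiv (pderiv p))
           + smult (d - c) (pderiv p) = 0"
proof (rule poly_ext)
  fix x
  show "poly ((1 - monom 1 1 * monom 1 1) * pderiv (pderiv (pderiv p)) - smult (c + 2) (monom 1 1 * pderiv (pderiv p))
           + smult (d - c) (pderiv p)) x = poly 0 x"
    using arg_cong[OF assms, of "\<lambda>q. poly (pderiv q) x"]
    by (simp add: pderiv_mult pderiv_diff pderiv_add pderiv_smult pderiv_monom poly_monom algebra_simps)
qed

lemma cheb_T_higher_ode:
  "(1 - monom 1 1 * monom 1 1) * (pderiv ^^ Suc (Suc k)) (cheb_T j)
     - smult (2 * real k + 1) (monom 1 1 * (pderiv ^^ Suc k) (cheb_T j))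
     + smult ((real j)\<^sup>2 - (real k)\<^sup>2) ((pderiv ^^ k) (cheb_T j)) = 0"
proof (induction k)
  case 0
  show ?case
    using cheb_T_ode[of j] by simp
next
  case (Suc k)
  then have "(1 - monom 1 1 * monom 1 1) * pderiv (pderiv ((pderiv ^^ k) (cheb_T j)))
     - smult (2 * real k + 1) (monom 1 1 * pderiv ((pderiv ^^ k) (cheb_T j)))
     + smult ((real j)\<^sup>2 - (real k)\<^sup>2) ((pderiv ^^ k) (cheb_T j)) = 0"
    by simp
  from pderiv_ode_step[OF this] show ?case
    by (simp add: power2_eq_square algebra_simps)
qed

lemma poly_higher_pderiv_cheb_T_one:
  "poly ((pderiv ^^ k) (cheb_T j)) 1 = (\<Prod>i<k. (real j)\<^sup>2 - (real i)\<^sup>2) / (2 ^ k * pochhammer (1 / 2) k)"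
proof (induction k)
  case 0
  show ?case by (simp add: poly_cheb_T_one)
next
  case (Suc k)
  have "(2 * real k + 1) * poly ((pderiv ^^ Suc k) (cheb_T j)) 1
      = ((real j)\<^sup>2 - (real k)\<^sup>2) * poly ((pderiv ^^ k) (cheb_T j)) 1"
    using arg_cong[OF cheb_T_higher_ode[of k j], of "\<lambda>p. poly p 1"] by (simp add: poly_monom)
  then have "poly ((pderiv ^^ Suc k) (cheb_T j)) 1
      = ((real j)\<^sup>2 - (real k)\<^sup>2) / (2 * real k + 1) * poly ((pderiv ^^ k) (cheb_T j)) 1"
    by (simp add: field_simps add_pos_pos)
  also have "\<dots> = (\<Prod>i<Suc k. (real j)\<^sup>2 - (real i)\<^sup>2)
      / ((2 * real k + 1) * (2 ^ k * pochhammer (1 / 2) k))"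
    unfolding Suc.IH by (simp add: mult_ac)
  also have "(2 * real k + 1) * (2 ^ k * pochhammer (1 / 2) k) = 2 ^ Suc k * pochhammer (1 / 2) (Suc k)"
    by (simp add: pochhammer_Suc algebra_simps)
  finally show ?case .
qed

lemma prod_diff_squares_mono:
  assumes "d \<le> N"
  shows "(\<Prod>i<k. (real d)\<^sup>2 - (real i)\<^sup>2) \<le> (\<Prod>i<k. (real N)\<^sup>2 - (real i)\<^sup>2)"
proof (cases "k \<le> d")
  case True
  with assms show ?thesis
    by (intro prod_mono) (auto simp: power_mono)
next
  case False
  then have "(\<Prod>i<k. (real d)\<^sup>2 - (real i)\<^sup>2) = 0"
    by (intro prod_zero) (auto intro!: bexI[of _ d])
  moreover have "(\<Prod>i<k. (real N)\<^sup>2 - (real i)\<^sup>2) \<ge> 0"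
  proof (cases "k \<le> N")
    case True
    then show ?thesis by (intro prod_nonneg) (auto simp: power_mono)
  next
    case False
    then show ?thesis by (subst prod_zero) (auto intro!: bexI[of _ N])
  qed
  ultimately show ?thesis by linarith
qed

inductive_set cheb_cone :: "real poly set" where
  zero: "0 \<in> cheb_cone"
| add_cheb_T: "p \<in> cheb_cone \<Longrightarrow> c \<ge> 0 \<Longrightarrow> p + smult c (cheb_T j) \<in> cheb_cone"

lemma smult_cheb_T_in_cheb_cone: "c \<ge> 0 \<Longrightarrow> smult c (cheb_T j) \<in> cheb_cone"
  using cheb_cone.add_cheb_T[OF cheb_cone.zero] by simp

lemma cheb_cone_add:
  assumes "p \<in> cheb_cone" and "q \<in> cheb_cone"
  shows "p + q \<in> cheb_cone"
  using assms(2)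
proof (induction q rule: cheb_cone.induct)
  case (add_cheb_T q c j)
  then show ?case using cheb_cone.add_cheb_T[of "p + q" c j] by (simp add: add.assoc)
qed (simp add: assms(1))

lemma cheb_cone_smult: "p \<in> cheb_cone \<Longrightarrow> c \<ge> 0 \<Longrightarrow> smult c p \<in> cheb_cone"
proof (induction p rule: cheb_cone.induct)
  case (add_cheb_T p d j)
  then show ?case using cheb_cone.add_cheb_T[of "smult c p" "c * d" j] by (simp add: smult_add_right)
qed (simp add: cheb_cone.zero)

lemma cheb_cone_sum:
  "(\<And>k. k \<in> A \<Longrightarrow> c k \<ge> 0) \<Longrightarrow> (\<Sum>k\<in>A. smult (c k) (cheb_T (d k))) \<in> cheb_cone"
  by (induction A rule: infinite_finite_induct)
     (auto intro: cheb_cone.zero cheb_cone_add smult_cheb_T_in_cheb_cone)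

lemma cheb_U_in_cheb_cone: "cheb_U n \<in> cheb_cone"
proof (induction n rule: cheb_U.induct)
  case 1
  show ?case by (metis cheb_T.simps(1) cheb_U.simps(1) smult_1_left smult_cheb_T_in_cheb_cone zero_le_one)
next
  case 2
  show ?case using smult_cheb_T_in_cheb_cone[of 2 1] by (simp add: numeral_poly)
next
  case (3 n)
  then show ?case
    unfolding cheb_U_Suc_Suc using smult_cheb_T_in_cheb_cone[of 2 "Suc (Suc n)"]
    by (auto intro: cheb_cone_add simp: numeral_poly)
qed

lemma pderiv_in_cheb_cone: "p \<in> cheb_cone \<Longrightarrow> pderiv p \<in> cheb_cone"
proof (induction p rule: cheb_cone.induct)
  case (add_cheb_T p c j)
  have "pderiv (cheb_T j) \<in> cheb_cone"
  proof (cases j)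
    case (Suc i)
    have "pderiv (cheb_T j) = smult (of_nat (Suc i)) (cheb_U i)"
      unfolding Suc pderiv_cheb_T of_nat_mult_conv_smult ..
    then show ?thesis by (simp add: cheb_U_in_cheb_cone cheb_cone_smult)
  qed (simp add: cheb_cone.zero)
  with add_cheb_T show ?case
    by (simp add: pderiv_add pderiv_smult cheb_cone_add cheb_cone_smult)
qed (simp add: cheb_cone.zero)

lemma higher_pderiv_in_cheb_cone: "p \<in> cheb_cone \<Longrightarrow> (pderiv ^^ k) p \<in> cheb_cone"
  by (induction k) (simp_all add: pderiv_in_cheb_cone)

lemma cheb_cone_abs_poly_le_poly_one:
  assumes "p \<in> cheb_cone" and "\<bar>x\<bar> \<le> 1"
  shows "\<bar>poly p x\<bar> \<le> poly p 1"
  using assms(1)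
proof (induction p rule: cheb_cone.induct)
  case (add_cheb_T p c j)
  have "\<bar>c * poly (cheb_T j) x\<bar> \<le> c"
    using abs_poly_cheb_T_le_one[OF assms(2)] add_cheb_T(2) by (simp add: abs_mult mult_left_le)
  with add_cheb_T show ?case by (simp add: poly_cheb_T_one)
qed simp

lemma coeff_linear_poly_power':
  fixes a b :: "'a::comm_semiring_1"
  shows "coeff ([:a, b:] ^ n) i = of_nat (n choose i) * b ^ i * a ^ (n - i)"
proof (cases "i \<le> n")
  case False
  have "degree ([:a, b:] ^ n) \<le> n"
    using degree_power_le[of "[:a, b:]" n] by (cases "b = 0") simp_all
  with False show ?thesis by (simp add: coeff_eq_0 binomial_eq_0)
qed (rule coeff_linear_poly_power)

text \<open>
  The coefficients of (z + 1)^p (z - 1)^q; in terms of the binary Krawtchouk polynomials,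
  krawtchouk p q j = (-1)^q K_j(q; p + q).
\<close>
definition krawtchouk :: "nat \<Rightarrow> nat \<Rightarrow> nat \<Rightarrow> int" where
  "krawtchouk p q j = (\<Sum>i\<le>j. int (p choose i) * (-1) ^ (q - (j - i)) * int (q choose (j - i)))"

lemma coeff_linear_powers_krawtchouk:
  fixes c :: "'a::comm_ring_1"
  shows "coeff ([:c, 1:] ^ p * [:- c, 1:] ^ q) j = c ^ (p + q - j) * of_int (krawtchouk p q j)"
  unfolding coeff_mult krawtchouk_def of_int_sum sum_distrib_left
proof (rule sum.cong)
  fix i assume "i \<in> {..j}"
  show "coeff ([:c, 1:] ^ p) i * coeff ([:- c, 1:] ^ q) (j - i) =
      c ^ (p + q - j) * of_int (int (p choose i) * (-1) ^ (q - (j - i)) * int (q choose (j - i)))"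
  proof (cases "i \<le> p \<and> j - i \<le> q")
    case True
    with \<open>i \<in> {..j}\<close> have "p + q - j = (p - i) + (q - (j - i))" by auto
    then show ?thesis
      by (simp add: coeff_linear_poly_power' power_add power_minus[of c] algebra_simps)
  next
    case False
    then show ?thesis by (auto simp: coeff_linear_poly_power' binomial_eq_0)
  qed
qed simp

lemma krawtchouk_reciprocity:
  assumes "k \<le> a + b"
  shows "fact k * fact (a + b - k) * real_of_int (krawtchouk a b k)
           = fact a * fact b * real_of_int (krawtchouk k (a + b - k) a)"
proof -
  define l where "l = a + b - k"
  define f where "f i = real (a choose i) * (-1) ^ (b - (k - i)) * real (b choose (k - i))" for i
  define g where "g i = real (k choose i) * (-1) ^ (l - (a - i)) * real (l choose (a - i))" for i
  have "real_of_int (krawtchouk a b k) = (\<Sum>i\<le>k. f i)"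
    by (simp add: krawtchouk_def f_def)
  also have "\<dots> = (\<Sum>i\<le>min a k. f i)"
    by (rule sum.mono_neutral_right) (auto simp: f_def binomial_eq_0)
  finally have krawtchouk_f: "real_of_int (krawtchouk a b k) = (\<Sum>i\<le>min a k. f i)" .
  have "real_of_int (krawtchouk k l a) = (\<Sum>i\<le>a. g i)"
    by (simp add: krawtchouk_def g_def)
  also have "\<dots> = (\<Sum>i\<le>min a k. g i)"
    by (rule sum.mono_neutral_right) (auto simp: g_def binomial_eq_0)
  finally have krawtchouk_g: "real_of_int (krawtchouk k l a) = (\<Sum>i\<le>min a k. g i)" .
  have termwise: "fact k * fact l * f i = fact a * fact b * g i" if "i \<le> min a k" for i
  proof (cases "k - i \<le> b")
    case True
    with that assms have "a - i \<le> l" and "l - (a - i) = b - (k - i)"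
      unfolding l_def by auto
    with True that show ?thesis
      unfolding f_def g_def by (simp add: binomial_fact field_simps)
  next
    case False
    with that assms have "l < a - i" unfolding l_def by auto
    with False show ?thesis unfolding f_def g_def by (simp add: binomial_eq_0)
  qed
  show ?thesis
    unfolding l_def[symmetric] krawtchouk_f krawtchouk_g sum_distrib_left by (simp add: termwise)
qed

definition poly_homogenized :: "nat \<Rightarrow> 'a::comm_semiring_1 poly \<Rightarrow> 'a \<Rightarrow> 'a \<Rightarrow> 'a" where
  "poly_homogenized d p u v = (\<Sum>k\<le>d. coeff p k * u ^ k * v ^ (d - k))"

lemma poly_homogenized_mult_linear:
  fixes p :: "'a::comm_semiring_1 poly"
  assumes "degree p \<le> d"
  shows "poly_homogenized (Suc d) (p * [:c, 1:]) u v = poly_homogenized d p u v * (u + c * v)"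
proof -
  have "poly_homogenized (Suc d) (smult c p) u v = c * v * poly_homogenized d p u v"
    using assms by (simp add: poly_homogenized_def coeff_eq_0 sum_distrib_left Suc_diff_le algebra_simps)
  moreover have "poly_homogenized (Suc d) (pCons 0 p) u v = u * poly_homogenized d p u v"
    unfolding poly_homogenized_def sum.atMost_Suc_shift by (simp add: sum_distrib_left algebra_simps)
  ultimately show ?thesis
    by (simp add: poly_homogenized_def sum.distrib algebra_simps flip: sum_distrib_left)
qed

lemma add_power_mult_diff_power:
  fixes u v :: "'a::comm_ring_1"
  shows "(u + v) ^ p * (u - v) ^ q = (\<Sum>k\<le>p + q. of_int (krawtchouk p q k) * u ^ k * v ^ (p + q - k))"
proof -
  have degree: "degree ([:1, 1:] ^ p * [:-1, 1:] ^ q :: 'a poly) \<le> p + q" for p q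
    using degree_mult_le[of "[:1, 1:] ^ p" "[:-1, 1:] ^ q :: 'a poly"]
      degree_power_le[of "[:1, 1:] :: 'a poly" p] degree_power_le[of "[:-1, 1:] :: 'a poly" q]
    by simp
  have "poly_homogenized (p + q) ([:1, 1:] ^ p * [:-1, 1:] ^ q) u v = (u + v) ^ p * (u - v) ^ q"
  proof (induction q)
    case 0
    show ?case
    proof (induction p)
      case (Suc p)
      have "poly_homogenized (Suc p + 0) ([:1, 1:] ^ Suc p * [:-1, 1:] ^ 0) u v
          = poly_homogenized (Suc (p + 0)) (([:1, 1:] ^ p * [:-1, 1:] ^ 0) * [:1, 1:]) u v"
        by (simp only: power_Suc2 mult.commute[of _ "[:1, 1:]"] mult.assoc add_0_right power_0 mult_1_right)
      also have "\<dots> = poly_homogenized (p + 0) ([:1, 1:] ^ p * [:-1, 1:] ^ 0) u v * (u + 1 * v)"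
        by (rule poly_homogenized_mult_linear[OF degree])
      finally show ?case using Suc.IH by simp
    qed (simp add: poly_homogenized_def)
  next
    case (Suc q)
    have "poly_homogenized (p + Suc q) ([:1, 1:] ^ p * [:-1, 1:] ^ Suc q) u v
        = poly_homogenized (Suc (p + q)) (([:1, 1:] ^ p * [:-1, 1:] ^ q) * [:-1, 1:]) u v"
      by (simp only: power_Suc2 mult.assoc add_Suc_right)
    also have "\<dots> = poly_homogenized (p + q) ([:1, 1:] ^ p * [:-1, 1:] ^ q) u v * (u + (-1) * v)"
      by (rule poly_homogenized_mult_linear[OF degree])
    finally show ?case using Suc.IH by simp
  qed
  then show ?thesis
    by (simp add: poly_homogenized_def coeff_linear_powers_krawtchouk[of 1, simplified] mult_ac)
qed

lemma coeff_rotation_powers: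
  fixes c s :: "'a::comm_ring_1"
  shows "coeff ([:c, s:] ^ b * [:- s, c:] ^ (b + m)) (b + m)
           = c ^ m * (\<Sum>i\<le>b. of_nat (b choose i) * of_nat ((b + m) choose i) * (- s\<^sup>2) ^ i * (c\<^sup>2) ^ (b - i))"
proof -
  have "coeff ([:c, s:] ^ b * [:- s, c:] ^ (b + m)) (b + m)
      = (\<Sum>i\<le>b + m. coeff ([:c, s:] ^ b) i * coeff ([:- s, c:] ^ (b + m)) (b + m - i))"
    by (rule coeff_mult)
  also have "\<dots> = (\<Sum>i\<le>b. coeff ([:c, s:] ^ b) i * coeff ([:- s, c:] ^ (b + m)) (b + m - i))"
    by (rule sum.mono_neutral_right) (auto simp: coeff_linear_poly_power' binomial_eq_0)
  also have "\<dots> = (\<Sum>i\<le>b. c ^ m * (of_nat (b choose i) * of_nat ((b + m) choose i) * (- s\<^sup>2) ^ i * (c\<^sup>2) ^ (b - i)))"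
  proof (rule sum.cong)
    fix i assume "i \<in> {..b}"
    then have i: "i \<le> b" by simp
    have "b + m - (b + m - i) = i" and "(b + m) choose (b + m - i) = (b + m) choose i"
      using i by (simp_all add: binomial_symmetric[symmetric])
    then have "coeff ([:c, s:] ^ b) i * coeff ([:- s, c:] ^ (b + m)) (b + m - i)
        = of_nat (b choose i) * of_nat ((b + m) choose i) * (s ^ i * (- s) ^ i) * (c ^ (b - i) * c ^ (b + m - i))"
      by (simp add: coeff_linear_poly_power' mult_ac)
    also have "s ^ i * (- s) ^ i = (- s\<^sup>2) ^ i"
      by (simp add: power_mult_distrib[symmetric] power2_eq_square)
    also have "c ^ (b - i) * c ^ (b + m - i) = c ^ m * (c\<^sup>2) ^ (b - i)"
    proof -
      have "b + m - i = m + (b - i)" using i by simp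
      then show ?thesis by (simp add: power_add power_mult_distrib power2_eq_square)
    qed
    finally show "coeff ([:c, s:] ^ b) i * coeff ([:- s, c:] ^ (b + m)) (b + m - i)
        = c ^ m * (of_nat (b choose i) * of_nat ((b + m) choose i) * (- s\<^sup>2) ^ i * (c\<^sup>2) ^ (b - i))"
      by (simp add: mult_ac)
  qed simp
  finally show ?thesis by (simp add: sum_distrib_left)
qed

lemma cis_power_mult_cnj_power:
  assumes "k \<le> N"
  shows "cis t ^ k * cnj (cis t) ^ (N - k) = cis ((2 * real k - real N) * t)"
  unfolding cis_cnj Complex.DeMoivre cis_mult using assms by (simp add: of_nat_diff algebra_simps)

definition zernike_weight :: "nat \<Rightarrow> nat \<Rightarrow> nat \<Rightarrow> real" where
  "zernike_weight a b k = of_int (krawtchouk a b k * krawtchouk k (a + b - k) a) / 2 ^ (a + b)"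

lemma zernike_weight_nonneg:
  assumes "k \<le> a + b"
  shows "zernike_weight a b k \<ge> 0"
proof -
  have "real_of_int (krawtchouk k (a + b - k) a)
      = fact k * fact (a + b - k) / (fact a * fact b) * real_of_int (krawtchouk a b k)"
    using krawtchouk_reciprocity[OF assms] by (simp add: field_simps)
  then have "real_of_int (krawtchouk a b k * krawtchouk k (a + b - k) a)
      = fact k * fact (a + b - k) / (fact a * fact b) * (real_of_int (krawtchouk a b k))\<^sup>2"
    by (simp add: power2_eq_square)
  then show ?thesis
    unfolding zernike_weight_def by simp
qed

lemma rotation_powers_expansion:
  fixes t :: real
  defines "c \<equiv> complex_of_real (cos t)" and "s \<equiv> complex_of_real (sin t)" and "w \<equiv> cis t"
  shows "[:c, s:] ^ b * [:- s, c:] ^ a = smult ((1 / (2 * \<i>)) ^ b * (1 / 2) ^ a)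
           (\<Sum>k\<le>a + b. smult (of_int (krawtchouk a b k) * w ^ k * cnj w ^ (a + b - k))
                                ([:\<i>, 1:] ^ k * [:- \<i>, 1:] ^ (a + b - k)))"
proof -
  define U where "U = smult w [:\<i>, 1:]"
  define V where "V = smult (cnj w) [:- \<i>, 1:]"
  have w: "w = c + \<i> * s" "cnj w = c - \<i> * s"
    unfolding w_def c_def s_def by (simp_all add: complex_eq_iff)
  have "cnj c = c" "cnj s = s"
    unfolding c_def s_def by simp_all
  then have rotation: "[:c, s:] = smult (1 / (2 * \<i>)) (U - V)" "[:- s, c:] = smult (1 / 2) (U + V)"
    unfolding U_def V_def w by (simp_all add: field_simps)
  have UV: "U ^ k * V ^ (a + b - k) =
      smult (w ^ k * cnj w ^ (a + b - k)) ([:\<i>, 1:] ^ k * [:- \<i>, 1:] ^ (a + b - k))" for k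
    unfolding U_def V_def smult_power by (simp add: mult.commute)
  have "[:c, s:] ^ b * [:- s, c:] ^ a = smult ((1 / (2 * \<i>)) ^ b * (1 / 2) ^ a) ((U + V) ^ a * (U - V) ^ b)"
    unfolding rotation by (simp add: smult_power mult_ac)
  also have "(U + V) ^ a * (U - V) ^ b = (\<Sum>k\<le>a + b. of_int (krawtchouk a b k) * U ^ k * V ^ (a + b - k))"
    by (rule add_power_mult_diff_power)
  also have "\<dots> = (\<Sum>k\<le>a + b. smult (of_int (krawtchouk a b k) * w ^ k * cnj w ^ (a + b - k))
                                ([:\<i>, 1:] ^ k * [:- \<i>, 1:] ^ (a + b - k)))"
    by (simp add: UV of_int_poly mult.assoc)
  finally show ?thesis .
qed

lemma coeff_rotation_powers_cis:
  fixes t :: real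
  defines "c \<equiv> complex_of_real (cos t)" and "s \<equiv> complex_of_real (sin t)"
  shows "coeff ([:c, s:] ^ b * [:- s, c:] ^ a) a
    = (\<Sum>k\<le>a + b. of_real (zernike_weight a b k) * cis ((2 * real k - real (a + b)) * t))"
proof -
  have "(1 / (2 * \<i>)) ^ b * (1 / 2) ^ a * \<i> ^ b = (1 / (2 * \<i>) * \<i>) ^ b * (1 / 2) ^ a"
    by (simp only: power_mult_distrib mult_ac)
  also have "\<dots> = 1 / 2 ^ (a + b)"
    by (simp add: power_add power_one_over)
  finally have scale: "(1 / (2 * \<i>)) ^ b * (1 / 2) ^ a * \<i> ^ b = 1 / 2 ^ (a + b)" .
  have "coeff ([:c, s:] ^ b * [:- s, c:] ^ a) a = (\<Sum>k\<le>a + b. (1 / (2 * \<i>)) ^ b * (1 / 2) ^ a *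
      (of_int (krawtchouk a b k) * cis t ^ k * cnj (cis t) ^ (a + b - k)
        * coeff ([:\<i>, 1:] ^ k * [:- \<i>, 1:] ^ (a + b - k)) a))"
    unfolding c_def s_def rotation_powers_expansion by (simp add: coeff_sum sum_distrib_left)
  also have "\<dots> = (\<Sum>k\<le>a + b. of_real (zernike_weight a b k) * cis ((2 * real k - real (a + b)) * t))"
  proof (rule sum.cong)
    fix k assume "k \<in> {..a + b}"
    then have k: "k \<le> a + b" by simp
    have "coeff ([:\<i>, 1:] ^ k * [:- \<i>, 1:] ^ (a + b - k)) a = \<i> ^ b * of_int (krawtchouk k (a + b - k) a)"
      using coeff_linear_powers_krawtchouk[of \<i> k "a + b - k" a] k by simp
    then have "(1 / (2 * \<i>)) ^ b * (1 / 2) ^ a * (of_int (krawtchouk a b k) * cis t ^ k * cnj (cis t) ^ (a + b - k)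
          * coeff ([:\<i>, 1:] ^ k * [:- \<i>, 1:] ^ (a + b - k)) a)
        = ((1 / (2 * \<i>)) ^ b * (1 / 2) ^ a * \<i> ^ b) * (of_int (krawtchouk a b k) * of_int (krawtchouk k (a + b - k) a))
          * (cis t ^ k * cnj (cis t) ^ (a + b - k))"
      by (simp only: mult_ac)
    also have "\<dots> = of_real (zernike_weight a b k) * cis ((2 * real k - real (a + b)) * t)"
      unfolding scale cis_power_mult_cnj_power[OF k] zernike_weight_def by simp
    finally show "(1 / (2 * \<i>)) ^ b * (1 / 2) ^ a * (of_int (krawtchouk a b k) * cis t ^ k * cnj (cis t) ^ (a + b - k)
          * coeff ([:\<i>, 1:] ^ k * [:- \<i>, 1:] ^ (a + b - k)) a)
        = of_real (zernike_weight a b k) * cis ((2 * real k - real (a + b)) * t)" .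
  qed simp
  finally show ?thesis .
qed

lemma sum_zernike_weight: "(\<Sum>k\<le>a + b. zernike_weight a b k) = 1"
proof -
  have "complex_of_real (\<Sum>k\<le>a + b. zernike_weight a b k) = coeff ([:1, 0:] ^ b * [:- 0, 1:] ^ a) a"
    using coeff_rotation_powers_cis[of 0 b a] by simp
  also have "\<dots> = 1"
    using coeff_linear_poly_power'[of "0 :: complex" 1 a a] by (simp flip: one_pCons)
  finally show ?thesis
    by (metis of_real_eq_1_iff)
qed

lemma jacobi_poly_0_nat:
  "jacobi_poly b 0 (real m) x
     = (\<Sum>i\<le>b. real (b choose i) * real ((b + m) choose i) * ((x - 1) / 2) ^ i * ((x + 1) / 2) ^ (b - i))"
  unfolding jacobi_poly_def
  by (intro sum.cong refl) (simp add: binomial_gbinomial[symmetric] binomial_symmetric[symmetric] flip: of_nat_add)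

lemma zernike_cos_expansion:
  "cos t ^ m * jacobi_poly b 0 (real m) (2 * (cos t)\<^sup>2 - 1)
     = (\<Sum>k\<le>b + m + b. zernike_weight (b + m) b k * cos ((2 * real k - real (b + m + b)) * t))"
proof -
  define c s where "c = complex_of_real (cos t)" and "s = complex_of_real (sin t)"
  have "(2 * (cos t)\<^sup>2 - 1 - 1) / 2 = - (sin t)\<^sup>2" and "(2 * (cos t)\<^sup>2 - 1 + 1) / 2 = (cos t)\<^sup>2"
    by (simp_all add: sin_squared_eq)
  then have "complex_of_real (cos t ^ m * jacobi_poly b 0 (real m) (2 * (cos t)\<^sup>2 - 1))
      = c ^ m * (\<Sum>i\<le>b. of_nat (b choose i) * of_nat ((b + m) choose i) * (- s\<^sup>2) ^ i * (c\<^sup>2) ^ (b - i))"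
    unfolding c_def s_def jacobi_poly_0_nat by simp
  also have "\<dots> = coeff ([:c, s:] ^ b * [:- s, c:] ^ (b + m)) (b + m)"
    by (rule coeff_rotation_powers[symmetric])
  also have "\<dots> = (\<Sum>k\<le>b + m + b. of_real (zernike_weight (b + m) b k) * cis ((2 * real k - real (b + m + b)) * t))"
    unfolding c_def s_def by (rule coeff_rotation_powers_cis)
  finally have "cos t ^ m * jacobi_poly b 0 (real m) (2 * (cos t)\<^sup>2 - 1)
      = Re (\<Sum>k\<le>b + m + b. of_real (zernike_weight (b + m) b k) * cis ((2 * real k - real (b + m + b)) * t))"
    by (metis Re_complex_of_real)
  then show ?thesis by simp
qed

definition zernike_cheb :: "nat \<Rightarrow> nat \<Rightarrow> real poly" where
  "zernike_cheb a b = (\<Sum>k\<le>a + b. smult (zernike_weight a b k) (cheb_T (nat \<bar>2 * int k - int (a + b)\<bar>)))"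

lemma poly_zernike_cheb_cos:
  "poly (zernike_cheb a b) (cos t) = (\<Sum>k\<le>a + b. zernike_weight a b k * cos ((2 * real k - real (a + b)) * t))"
proof -
  have "cos (\<bar>x\<bar> * t) = cos (x * t)" for x
    by (cases "x \<ge> 0") (simp_all add: abs_of_neg)
  moreover have "real (nat \<bar>2 * int k - int (a + b)\<bar>) = \<bar>2 * real k - real (a + b)\<bar>" for k
    by simp
  ultimately show ?thesis
    by (simp add: zernike_cheb_def poly_sum poly_cheb_T_cos)
qed

lemma zernike_cheb_in_cheb_cone: "zernike_cheb a b \<in> cheb_cone"
  unfolding zernike_cheb_def by (rule cheb_cone_sum) (simp add: zernike_weight_nonneg)

lemma poly_eq_if_eq_on_infinite:
  fixes p q :: "'a::idom poly"
  assumes "infinite A" and "\<And>x. x \<in> A \<Longrightarrow> poly p x = poly q x"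
  shows "p = q"
proof (rule ccontr)
  assume "p \<noteq> q"
  then have "finite {x. poly (p - q) x = 0}"
    by (intro poly_roots_finite) simp
  moreover have "A \<subseteq> {x. poly (p - q) x = 0}"
    using assms(2) by auto
  ultimately show False
    using assms(1) finite_subset by blast
qed

lemma zernike_eq_poly_zernike_cheb:
  "(\<lambda>r. r ^ m * jacobi_poly b 0 (real m) (2 * r\<^sup>2 - 1)) = poly (zernike_cheb (b + m) b)"
proof -
  define Z where "Z = monom 1 m *
    (\<Sum>i\<le>b. smult (real (b choose i) * real ((b + m) choose i)) ([:-1, 0, 1:] ^ i * [:0, 0, 1:] ^ (b - i)))"
  have Z: "r ^ m * jacobi_poly b 0 (real m) (2 * r\<^sup>2 - 1) = poly Z r" for r
  proof -
    have bases: "(2 * r\<^sup>2 - 1 - 1) / 2 = poly [:-1, 0, 1:] r" "(2 * r\<^sup>2 - 1 + 1) / 2 = poly [:0, 0, 1:] r"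
      by (simp_all add: power2_eq_square)
    show ?thesis
      unfolding jacobi_poly_0_nat bases by (simp add: Z_def poly_sum poly_monom sum_distrib_left mult_ac)
  qed
  have "Z = zernike_cheb (b + m) b"
  proof (rule poly_eq_if_eq_on_infinite)
    show "infinite {-1..1 :: real}" by simp
  next
    fix r :: real assume "r \<in> {-1..1}"
    then have r: "cos (arccos r) = r" by (simp add: cos_arccos_abs abs_le_iff)
    show "poly Z r = poly (zernike_cheb (b + m) b) r"
      using zernike_cos_expansion[of "arccos r" m b] poly_zernike_cheb_cos[of "b + m" b "arccos r"]
      unfolding r Z[symmetric] by (simp add: add.commute add.left_commute)
  qed
  with Z show ?thesis by auto
qed

lemma abs_poly_higher_pderiv_zernike_cheb_le:
  assumes "\<bar>x\<bar> \<le> 1"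
  shows "\<bar>poly ((pderiv ^^ k) (zernike_cheb a b)) x\<bar>
           \<le> (\<Prod>i<k. (real (a + b))\<^sup>2 - (real i)\<^sup>2) / (2 ^ k * pochhammer (1 / 2) k)"
proof -
  define M where "M d = (\<Prod>i<k. (real d)\<^sup>2 - (real i)\<^sup>2) / (2 ^ k * pochhammer (1 / 2) k)" for d
  have "\<bar>poly ((pderiv ^^ k) (zernike_cheb a b)) x\<bar> \<le> poly ((pderiv ^^ k) (zernike_cheb a b)) 1"
    by (rule cheb_cone_abs_poly_le_poly_one[OF higher_pderiv_in_cheb_cone[OF zernike_cheb_in_cheb_cone] assms])
  also have "\<dots> = (\<Sum>j\<le>a + b. zernike_weight a b j * M (nat \<bar>2 * int j - int (a + b)\<bar>))"
    by (simp add: zernike_cheb_def higher_pderiv_sum higher_pderiv_smult poly_sum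
        poly_higher_pderiv_cheb_T_one M_def)
  also have "\<dots> \<le> (\<Sum>j\<le>a + b. zernike_weight a b j * M (a + b))"
  proof (intro sum_mono mult_left_mono)
    fix j assume "j \<in> {..a + b}"
    then show "zernike_weight a b j \<ge> 0" by (simp add: zernike_weight_nonneg)
    have "nat \<bar>2 * int j - int (a + b)\<bar> \<le> a + b"
      using \<open>j \<in> {..a + b}\<close> by auto
    then show "M (nat \<bar>2 * int j - int (a + b)\<bar>) \<le> M (a + b)"
      unfolding M_def by (intro divide_right_mono prod_diff_squares_mono) (simp_all add: pochhammer_nonneg)
  qed
  also have "\<dots> = M (a + b)"
    by (simp add: sum_zernike_weight flip: sum_distrib_right)
  finally show ?thesis unfolding M_def .
qed

lemma higher_deriv_poly: "(deriv ^^ k) (poly p) = poly ((pderiv ^^ k) p)"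
proof (induction k)
  case (Suc k)
  have "deriv (poly q) = poly (pderiv q)" for q :: "'a poly"
    by (rule ext) (rule DERIV_imp_deriv[OF poly_DERIV])
  with Suc.IH show ?case by simp
qed simp

lemma zernike_radial_cheb_expansion:
  assumes "even (n - \<bar>m\<bar>)" and "\<bar>m\<bar> \<le> n"
  obtains a b where "n = int (a + b)" and "zernike_radial n m = poly (zernike_cheb a b)"
proof -
  obtain q where q: "n - \<bar>m\<bar> = 2 * q" using assms(1) by (elim evenE)
  with assms(2) have "q \<ge> 0" by simp
  have "zernike_radial n m = (\<lambda>r. r ^ nat \<bar>m\<bar> * jacobi_poly (nat q) 0 (real (nat \<bar>m\<bar>)) (2 * r\<^sup>2 - 1))"
    by (rule ext) (simp add: zernike_radial_def q)
  also have "\<dots> = poly (zernike_cheb (nat q + nat \<bar>m\<bar>) (nat q))"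
    by (rule zernike_eq_poly_zernike_cheb)
  finally have Z: "zernike_radial n m = poly (zernike_cheb (nat q + nat \<bar>m\<bar>) (nat q))" .
  from q \<open>q \<ge> 0\<close> have n: "n = int (nat q + nat \<bar>m\<bar> + nat q)"
    by simp
  show ?thesis by (rule that[OF n Z])
qed

theorem mainTheorem1:
  fixes n m :: int and k :: nat
  assumes "even (n - \<bar>m\<bar>)" and "\<bar>m\<bar> \<le> n"
  shows "\<forall>r\<in>{0..1::real}.
           \<bar>(deriv ^^ k) (zernike_radial n m) r\<bar>
             \<le> (\<Prod>j<k. (of_int n)\<^sup>2 - (real j)\<^sup>2) / (2 ^ k * pochhammer (1/2) k)"
proof
  fix r :: real assume "r \<in> {0..1}"
  then have "\<bar>r\<bar> \<le> 1" by simp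
  obtain a b where n: "n = int (a + b)" and Z: "zernike_radial n m = poly (zernike_cheb a b)"
    using zernike_radial_cheb_expansion[OF assms] .
  show "\<bar>(deriv ^^ k) (zernike_radial n m) r\<bar>
          \<le> (\<Prod>j<k. (of_int n)\<^sup>2 - (real j)\<^sup>2) / (2 ^ k * pochhammer (1/2) k)"
    unfolding Z higher_deriv_poly
    using abs_poly_higher_pderiv_zernike_cheb_le[OF \<open>\<bar>r\<bar> \<le> 1\<close>] by (simp add: n)
qed

end
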